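(* Let $k$ be an integer and $d,m\geqslant1$ integers, let $U\subset\{k+d,k+2d,\dots,k+md\}$, let $q$ be a positive integer coprime to $d$, and let $a$ be a residue class modulo $q$. If $|U|\geqslant\frac m2+\frac q2$, then the number of elements of $U+U$ that are congruent to $a$ modulo $q$ is at least $\frac2q|U|-1$.
   Context: $U+U=\{u+u':u,u'\in U\}$. *)

theory Defs
  imports Complex_Main "HOL-Number_Theory.Cong"
begin

definition sumset :: "int set \<Rightarrow> int set \<Rightarrow> int set" where
  "sumset A B = {u + v | u v. u \<in> A \<and> v \<in> B}"

end

theory Submission
  imports Defs
begin

text \<open>Split \<open>U\<close> into its residue classes mod \<open>q\<close>. Since \<open>q\<close> is coprime to \<open>d\<close>, the
  elements of one class have indices \<open>j\<close> that are pairwise incongruent mod \<open>q\<close>, so each class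
  has at most \<open>(m + q - 1)/q\<close> elements. Averaging over the \<open>q\<close> pairs of classes
  \<open>c, a - c\<close> gives a pair \<open>A, B\<close> with \<open>q (|A| + |B|) \<ge> 2|U| \<ge> m + q\<close>, which forces both
  classes to be nonempty; then \<open>A + B\<close> lies in the class of \<open>a\<close> and has at least
  \<open>|A| + |B| - 1\<close> elements.\<close>

lemma sumset_eq_image: "sumset A B = (\<lambda>(u, v). u + v) ` (A \<times> B)"
  unfolding sumset_def by auto

lemma finite_sumset: "finite A \<Longrightarrow> finite B \<Longrightarrow> finite (sumset A B)"
  by (simp add: sumset_eq_image)

text \<open>The translates \<open>min A + B\<close> and \<open>A + max B\<close> meet only in \<open>min A + max B\<close>.\<close>

lemma card_sumset_ge:
  assumes "finite A" "finite B" "A \<noteq> {}" "B \<noteq> {}"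
  shows "card A + card B \<le> card (sumset A B) + 1"
proof -
  define S1 where "S1 = (\<lambda>b. Min A + b) ` B"
  define S2 where "S2 = (\<lambda>a. a + Max B) ` A"
  have card_S1: "card S1 = card B" and card_S2: "card S2 = card A"
    unfolding S1_def S2_def by (simp_all add: card_image)
  have "S1 \<inter> S2 \<subseteq> {Min A + Max B}"
  proof
    fix x assume "x \<in> S1 \<inter> S2"
    then obtain a b where "a \<in> A" "b \<in> B" "x = Min A + b" "x = a + Max B"
      unfolding S1_def S2_def by auto
    moreover from this have "Min A \<le> a" "b \<le> Max B" using assms by simp_all
    ultimately show "x \<in> {Min A + Max B}" by auto
  qed
  then have "card (S1 \<inter> S2) \<le> 1"
    using card_mono[of "{Min A + Max B}"] by simp
  moreover have "finite S1" "finite S2"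
    unfolding S1_def S2_def using assms by simp_all
  moreover have "S1 \<union> S2 \<subseteq> sumset A B"
    unfolding S1_def S2_def sumset_def using assms by (auto intro: Min_in Max_in)
  ultimately have "card S1 + card S2 \<le> card (sumset A B) + 1"
    using card_Un_Int[of S1 S2] card_mono[OF finite_sumset[OF assms(1,2)], of "S1 \<union> S2"]
    by linarith
  then show ?thesis by (simp add: card_S1 card_S2)
qed

lemma sumset_residue_classes_subset:
  assumes "[c + c' = a] (mod q)"
  shows "sumset {u \<in> U. u mod q = c} {u \<in> U. u mod q = c'}
           \<subseteq> {x \<in> sumset U U. [x = a] (mod q)}"
proof
  fix x assume "x \<in> sumset {u \<in> U. u mod q = c} {u \<in> U. u mod q = c'}"
  then obtain u v where uv: "x = u + v" "u \<in> U" "v \<in> U" "u mod q = c" "v mod q = c'"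
    unfolding sumset_def by auto
  then have "[x = c + c'] (mod q)"
    by (metis cong_def mod_add_eq)
  with assms uv show "x \<in> {x \<in> sumset U U. [x = a] (mod q)}"
    unfolding sumset_def by (auto intro: cong_trans)
qed

lemma card_sumset_residue_classes_ge:
  assumes "finite U" "[c + c' = a] (mod q)"
    and "{u \<in> U. u mod q = c} \<noteq> {}" "{u \<in> U. u mod q = c'} \<noteq> {}"
  shows "card {u \<in> U. u mod q = c} + card {u \<in> U. u mod q = c'}
           \<le> card {x \<in> sumset U U. [x = a] (mod q)} + 1"
proof -
  have "card {x \<in> sumset U U. [x = a] (mod q)}
          \<ge> card (sumset {u \<in> U. u mod q = c} {u \<in> U. u mod q = c'})"
    using sumset_residue_classes_subset[OF assms(2)] finite_sumset[OF assms(1,1)]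
    by (intro card_mono) simp_all
  moreover have "card {u \<in> U. u mod q = c} + card {u \<in> U. u mod q = c'}
      \<le> card (sumset {u \<in> U. u mod q = c} {u \<in> U. u mod q = c'}) + 1"
    using assms by (intro card_sumset_ge) simp_all
  ultimately show ?thesis by linarith
qed

text \<open>Within a class, the map sending \<open>k + j d\<close> to \<open>(j - 1) div q\<close> is injective into
  \<open>{0..(m - 1) div q}\<close>, because the indices \<open>j\<close> are fixed mod \<open>q\<close>.\<close>

lemma card_residue_class_progression:
  fixes k d m q c :: int
  assumes U: "U \<subseteq> (\<lambda>j. k + j * d) ` {1..m}"
    and "m \<ge> 1" "q \<ge> 1" "d \<ge> 1" "coprime q d"
  shows "q * int (card {u \<in> U. u mod q = c}) \<le> m + q - 1"
proof -
  define C where "C = {u \<in> U. u mod q = c}"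
  define f where "f u = ((u - k) div d - 1) div q" for u
  have index: "(k + j * d - k) div d = j" for j
    using \<open>d \<ge> 1\<close> by (simp only: add_diff_cancel_left') simp
  have "inj_on f C"
  proof (rule inj_onI)
    fix u u' assume "u \<in> C" "u' \<in> C" and f_eq: "f u = f u'"
    obtain j j' where j: "u = k + j * d" "u' = k + j' * d"
      using U \<open>u \<in> C\<close> \<open>u' \<in> C\<close> unfolding C_def by blast
    moreover have "u mod q = u' mod q"
      using \<open>u \<in> C\<close> \<open>u' \<in> C\<close> unfolding C_def by simp
    ultimately have "q dvd (j - j') * d"
      by (simp add: mod_eq_dvd_iff algebra_simps)
    then have "q dvd (j - 1) - (j' - 1)"
      using \<open>coprime q d\<close> by (simp add: coprime_dvd_mult_left_iff)
    then have "(j - 1) mod q = (j' - 1) mod q"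
      by (simp only: mod_eq_dvd_iff)
    moreover have "(j - 1) div q = (j' - 1) div q"
      using f_eq unfolding f_def j index .
    ultimately have "j - 1 = j' - 1"
      by (metis div_mult_mod_eq)
    then show "u = u'" using j by simp
  qed
  moreover have "f ` C \<subseteq> {0..(m - 1) div q}"
  proof
    fix x assume "x \<in> f ` C"
    then obtain u where u: "u \<in> U" "x = f u"
      unfolding C_def by auto
    from subsetD[OF U u(1)] obtain j where "u = k + j * d" "j \<in> {1..m}"
      by (rule imageE)
    with u \<open>q \<ge> 1\<close> \<open>d \<ge> 1\<close> show "x \<in> {0..(m - 1) div q}"
      by (simp add: f_def index pos_imp_zdiv_nonneg_iff zdiv_mono1)
  qed
  ultimately have "card C \<le> nat ((m - 1) div q + 1)"
    using card_mono[of "{0..(m - 1) div q}" "f ` C"] by (simp add: card_image)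
  moreover have "0 \<le> (m - 1) div q"
    using \<open>m \<ge> 1\<close> \<open>q \<ge> 1\<close> by (simp add: pos_imp_zdiv_nonneg_iff)
  ultimately have "int (card C) \<le> (m - 1) div q + 1"
    by (simp add: le_nat_iff)
  from mult_left_mono[OF this, of q] \<open>q \<ge> 1\<close>
  have "q * int (card C) \<le> q * ((m - 1) div q) + q"
    by (simp add: distrib_left)
  also have "\<dots> \<le> m + q - 1"
    using \<open>q \<ge> 1\<close> minus_mod_eq_mult_div[of "m - 1" q] pos_mod_sign[of q "m - 1"] by linarith
  finally show ?thesis unfolding C_def .
qed

lemma sum_card_residue_classes:
  fixes q :: int
  assumes "finite U" "q \<ge> 1"
  shows "(\<Sum>c\<in>{0..<q}. card {u \<in> U. u mod q = c}) = card U"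
proof -
  have "U = (\<Union>c\<in>{0..<q}. {u \<in> U. u mod q = c})"
    using \<open>q \<ge> 1\<close> by auto
  also have "card \<dots> = (\<Sum>c\<in>{0..<q}. card {u \<in> U. u mod q = c})"
    using assms(1) by (intro card_UN_disjoint) auto
  finally show ?thesis ..
qed

lemma exists_large_residue_class_pair:
  fixes q a :: int
  assumes "finite U" "q \<ge> 1"
  obtains c where "c \<in> {0..<q}"
    "2 * int (card U) \<le> q * (int (card {u \<in> U. u mod q = c})
                              + int (card {u \<in> U. u mod q = (a - c) mod q}))"
proof -
  define n where "n c = int (card {u \<in> U. u mod q = c})" for c
  have "(\<Sum>c\<in>{0..<q}. n ((a - c) mod q)) = (\<Sum>c\<in>{0..<q}. n c)"
    by (rule sum.reindex_bij_witness[where i="\<lambda>c. (a - c) mod q" and j="\<lambda>c. (a - c) mod q"])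
      (use \<open>q \<ge> 1\<close> in \<open>auto simp: mod_diff_right_eq\<close>)
  moreover have "(\<Sum>c\<in>{0..<q}. n c) = int (card U)"
    unfolding n_def using sum_card_residue_classes[OF assms] by (metis of_nat_sum)
  ultimately have sum_eq: "(\<Sum>c\<in>{0..<q}. q * (n c + n ((a - c) mod q))) = q * (2 * int (card U))"
    by (simp flip: sum_distrib_left add: sum.distrib)
  show ?thesis
  proof (rule ccontr)
    assume "\<not> ?thesis"
    then have "\<And>c. c \<in> {0..<q} \<Longrightarrow> q * (n c + n ((a - c) mod q)) < 2 * int (card U)"
      using that unfolding n_def by force
    then have "(\<Sum>c\<in>{0..<q}. q * (n c + n ((a - c) mod q))) < int (card {0..<q}) * (2 * int (card U))"
      using \<open>q \<ge> 1\<close> by (intro sum_bounded_above_strict) auto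
    with sum_eq \<open>q \<ge> 1\<close> show False by simp
  qed
qed

theorem mainTheorem8:
  fixes k d m q a :: int and U :: "int set"
  assumes "d \<ge> 1" and "m \<ge> 1"
    and "U \<subseteq> {k + j * d | j. 1 \<le> j \<and> j \<le> m}"
    and "q \<ge> 1" and "coprime q d"
    and "real (card U) \<ge> real_of_int m / 2 + real_of_int q / 2"
  shows "real (card {x \<in> sumset U U. [x = a] (mod q)}) \<ge> 2 / real_of_int q * real (card U) - 1"
proof -
  have U: "U \<subseteq> (\<lambda>j. k + j * d) ` {1..m}"
    using assms(3) by fastforce
  then have "finite U" by (rule finite_subset) simp
  then obtain c where pair:
    "2 * int (card U) \<le> q * (int (card {u \<in> U. u mod q = c})
                            + int (card {u \<in> U. u mod q = (a - c) mod q}))"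
    using exists_large_residue_class_pair \<open>q \<ge> 1\<close> by blast
  define A where "A = {u \<in> U. u mod q = c}"
  define B where "B = {u \<in> U. u mod q = (a - c) mod q}"
  define T where "T = {x \<in> sumset U U. [x = a] (mod q)}"
  have pair: "2 * int (card U) \<le> q * (int (card A) + int (card B))"
    using pair unfolding A_def B_def .
  have large: "m + q \<le> 2 * int (card U)"
    using assms(6) by linarith
  have small: "q * int (card A) \<le> m + q - 1" "q * int (card B) \<le> m + q - 1"
    unfolding A_def B_def using card_residue_class_progression[OF U assms(2,4,1,5)] by blast+
  have "A \<noteq> {}" "B \<noteq> {}"
    using pair large small by (auto simp del: card_0_eq)
  then have "card A + card B \<le> card T + 1"
    unfolding A_def B_def T_def
    by (intro card_sumset_residue_classes_ge \<open>finite U\<close>) (simp_all add: cong_def mod_add_right_eq)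
  then have "int (card A) + int (card B) \<le> int (card T) + 1"
    by linarith
  from mult_left_mono[OF this, of q] pair \<open>q \<ge> 1\<close>
  have "2 * int (card U) \<le> q * (int (card T) + 1)"
    by linarith
  then have "real_of_int (2 * int (card U)) \<le> real_of_int (q * (int (card T) + 1))"
    by (simp only: of_int_le_iff)
  then show ?thesis
    using \<open>q \<ge> 1\<close> unfolding T_def by (simp add: field_simps)
qed

end
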